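(* Let $X$ be a topological space which is not a Baire space. Then there exist a nonempty open set $U\subseteq X$ and a fragmentable function $f\colon X\to\mathbb R$ such that $f$ has no point of continuity in $U$ and $f(X)\subseteq\{1/n:n\in\mathbb N\}$. Moreover, if $X$ is perfectly normal, then $f$ can be chosen to have, in addition, the Lebesgue property.
   Context: A topological space is Baire if every nonempty open subset of it is nonmeager in it. $f\colon X\to\mathbb R$ is fragmentable if for every $\varepsilon>0$ and every nonempty closed $F\subseteq X$ there is an open $U$ with $U\cap F\neq\emptyset$ and $\operatorname{diam} f(U\cap F)<\varepsilon$; it has the Lebesgue property if for every $\varepsilon>0$ there are closed sets $X_n$ ($n\in\mathbb N$) with $X=\bigcup_n X_n$ and $\operatorname{diam} f(X_n)\le\varepsilon$ for all $n$. *)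

theory Defs
  imports "HOL-Analysis.Analysis"
begin

definition nowhere_dense_in :: "'a topology \<Rightarrow> 'a set \<Rightarrow> bool" where
  "nowhere_dense_in X S \<longleftrightarrow> S \<subseteq> topspace X \<and> X interior_of (X closure_of S) = {}"

definition meager_in :: "'a topology \<Rightarrow> 'a set \<Rightarrow> bool" where
  "meager_in X S \<longleftrightarrow> (\<exists>\<F>. countable \<F> \<and> (\<forall>N\<in>\<F>. nowhere_dense_in X N) \<and> S = \<Union>\<F>)"

definition baire_space :: "'a topology \<Rightarrow> bool" where
  "baire_space X \<longleftrightarrow>
     (\<forall>U. openin X U \<and> U \<noteq> {} \<longrightarrow> \<not> meager_in (subtopology X U) U)"

text \<open>diam A < e, resp. diam A \<le> e, for a set of reals (diam of an unbounded set is infinite).\<close>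
definition diam_less :: "real set \<Rightarrow> real \<Rightarrow> bool" where
  "diam_less A e \<longleftrightarrow> bounded A \<and> diameter A < e"

definition diam_le :: "real set \<Rightarrow> real \<Rightarrow> bool" where
  "diam_le A e \<longleftrightarrow> bounded A \<and> diameter A \<le> e"

definition fragmentable :: "'a topology \<Rightarrow> ('a \<Rightarrow> real) \<Rightarrow> bool" where
  "fragmentable X f \<longleftrightarrow>
     (\<forall>e>0. \<forall>F. closedin X F \<and> F \<noteq> {} \<longrightarrow>
        (\<exists>U. openin X U \<and> U \<inter> F \<noteq> {} \<and> diam_less (f ` (U \<inter> F)) e))"

definition lebesgue_property :: "'a topology \<Rightarrow> ('a \<Rightarrow> real) \<Rightarrow> bool" where
  "lebesgue_property X f \<longleftrightarrow>
     (\<forall>e>0. \<exists>C :: nat \<Rightarrow> 'a set. (\<forall>n. closedin X (C n)) \<and> topspace X = (\<Union>n. C n)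
        \<and> (\<forall>n. diam_le (f ` C n) e))"

definition continuous_at_point :: "'a topology \<Rightarrow> ('a \<Rightarrow> real) \<Rightarrow> 'a \<Rightarrow> bool" where
  "continuous_at_point X f x \<longleftrightarrow> x \<in> topspace X \<and>
     (\<forall>V. open V \<and> f x \<in> V \<longrightarrow> (\<exists>W. openin X W \<and> x \<in> W \<and> f ` W \<subseteq> V))"

definition perfectly_normal :: "'a topology \<Rightarrow> bool" where
  "perfectly_normal X \<longleftrightarrow> normal_space X \<and> (\<forall>C. closedin X C \<longrightarrow> gdelta_in X C)"

end

theory Submission
  imports Defs
begin

text \<open>If \<open>X\<close> is not Baire, some nonempty open set \<open>U\<close> is exhausted by an increasing
  sequence \<open>{} = K 0 \<subseteq> K 1 \<subseteq> \<dots>\<close> of closed sets with empty interior. Let \<open>f\<close> be \<open>1/n\<close>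
  on the layer \<open>U \<inter> K n - K (n - 1)\<close> and \<open>1\<close> off \<open>U\<close>. Every neighbourhood of a point of
  the \<open>n\<close>-th layer leaves \<open>K n\<close>, i.e. meets deeper layers where \<open>f < 1/n\<close>, so \<open>f\<close> is
  nowhere continuous on \<open>U\<close>. Given a closed set \<open>C\<close> meeting \<open>U\<close> and any \<open>N\<close>, either \<open>C\<close>
  meets the open set \<open>U - K N\<close>, where \<open>f \<le> 1/(N+1)\<close>, or for the last \<open>m\<close> such that \<open>C\<close>
  meets \<open>U - K m\<close>, \<open>f\<close> is constant on \<open>C \<inter> (U - K m)\<close>; this is fragmentability.
  In a perfectly normal space the layers are \<open>F\<^sub>\<sigma>\<close>, so \<open>X\<close> is a countable union of closed
  sets on each of which \<open>f\<close> is constant, which gives the Lebesgue property.\<close>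

lemma diam_less_if_subset_atLeastAtMost:
  fixes A :: "real set"
  assumes "A \<subseteq> {a..b}" "a \<le> b" "b - a < e"
  shows "diam_less A e"
proof -
  have "diameter A \<le> b - a"
    using diameter_subset[OF assms(1)] assms(2) by simp
  then show ?thesis
    using assms bounded_subset[OF bounded_closed_interval] by (auto simp: diam_less_def)
qed

lemma diam_less_imp_diam_le: "diam_less A e \<Longrightarrow> diam_le A e"
  by (simp add: diam_less_def diam_le_def)

lemma diam_less_image_constant_on:
  assumes "f constant_on S" "e > 0"
  shows "diam_less (f ` S) e"
proof -
  obtain c where "\<forall>x\<in>S. f x = c"
    using assms(1) unfolding constant_on_def by blast
  then have "f ` S \<subseteq> {c..c}" by auto
  then show ?thesis
    using assms(2) diam_less_if_subset_atLeastAtMost[of "f ` S" c c e] by simp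
qed

lemma lebesgue_property_if_constant_on_closed_cover:
  assumes "countable \<C>" "\<And>D. D \<in> \<C> \<Longrightarrow> closedin X D" "\<Union>\<C> = topspace X"
    and "\<And>D. D \<in> \<C> \<Longrightarrow> f constant_on D"
  shows "lebesgue_property X f"
proof -
  \<comment> \<open>\<open>from_nat_into\<close> needs a nonempty family; adding \<open>{}\<close> covers \<open>topspace X = {}\<close>.\<close>
  define C where "C n = from_nat_into (insert {} \<C>) n" for n
  have C_mem: "C n \<in> insert {} \<C>" for n
    unfolding C_def by (rule from_nat_into) simp
  have "topspace X = (\<Union>n. C n)"
    using assms(1,3) unfolding C_def by (simp add: range_from_nat_into)
  moreover have "closedin X (C n)" for n
    using C_mem[of n] assms(2) by auto
  moreover have "diam_le (f ` C n) e" if "e > 0" for n e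
  proof -
    have "f constant_on C n"
      using C_mem[of n] assms(4) by (auto simp: constant_on_def)
    then show ?thesis
      using \<open>e > 0\<close> by (intro diam_less_imp_diam_le diam_less_image_constant_on)
  qed
  ultimately show ?thesis
    unfolding lebesgue_property_def by (intro allI impI exI[of _ C]) blast
qed

lemma lebesgue_property_if_constant_on_fsigma_cover:
  assumes "countable \<P>" "\<And>P. P \<in> \<P> \<Longrightarrow> fsigma_in X P" "\<Union>\<P> = topspace X"
    and "\<And>P. P \<in> \<P> \<Longrightarrow> f constant_on P"
  shows "lebesgue_property X f"
proof -
  have "\<exists>\<D>. countable \<D> \<and> (\<forall>D\<in>\<D>. closedin X D) \<and> \<Union>\<D> = P" if "P \<in> \<P>" for P
    using assms(2)[OF that] unfolding fsigma_in_def union_of_def by blast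
  then obtain \<D> where countable_\<D>: "\<And>P. P \<in> \<P> \<Longrightarrow> countable (\<D> P)"
    and closedin_\<D>: "\<And>P D. P \<in> \<P> \<Longrightarrow> D \<in> \<D> P \<Longrightarrow> closedin X D"
    and Union_\<D>: "\<And>P. P \<in> \<P> \<Longrightarrow> \<Union>(\<D> P) = P"
    by metis
  show ?thesis
  proof (rule lebesgue_property_if_constant_on_closed_cover)
    show "countable (\<Union>P\<in>\<P>. \<D> P)"
      using assms(1) countable_\<D> by (rule countable_UN)
    show "closedin X D" if "D \<in> (\<Union>P\<in>\<P>. \<D> P)" for D
      using that closedin_\<D> by blast
    have "\<Union>(\<Union>P\<in>\<P>. \<D> P) = (\<Union>P\<in>\<P>. \<Union>(\<D> P))"
      by blast
    also have "\<dots> = topspace X"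
      using Union_\<D> assms(3) by simp
    finally show "\<Union>(\<Union>P\<in>\<P>. \<D> P) = topspace X" .
    show "f constant_on D" if D: "D \<in> (\<Union>P\<in>\<P>. \<D> P)" for D
    proof -
      obtain P where P: "P \<in> \<P>" "D \<in> \<D> P"
        using D by blast
      then have "D \<subseteq> P"
        using Union_\<D> by blast
      then show ?thesis
        using assms(4)[OF P(1)] by (rule constant_on_subset[rotated])
    qed
  qed
qed

lemma perfectly_normal_openin_imp_fsigma_in:
  assumes "perfectly_normal X" "openin X U"
  shows "fsigma_in X U"
proof -
  have "gdelta_in X (topspace X - U)"
    using assms unfolding perfectly_normal_def by blast
  then show ?thesis
    using openin_subset[OF assms(2)] by (simp add: gdelta_in_fsigma_in double_diff)
qed

lemma nowhere_dense_in_open_subtopology: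
  assumes U: "openin X U" and N: "nowhere_dense_in (subtopology X U) N"
  shows "nowhere_dense_in X N"
proof -
  have "N \<subseteq> U" "N \<subseteq> topspace X"
    using N openin_subset[OF U] by (auto simp: nowhere_dense_in_def)
  let ?W = "X interior_of (X closure_of N)"
  have "U \<inter> ?W = (subtopology X U) interior_of ((subtopology X U) closure_of N)"
    using U by (simp add: closure_of_subtopology_open interior_of_subtopology_open
        interior_of_Int interior_of_openin Int_assoc)
  then have "?W \<inter> U = {}"
    using N by (auto simp: nowhere_dense_in_def)
  then have "?W \<inter> X closure_of U = {}"
    by (simp add: openin_Int_closure_of_eq_empty)
  moreover have "?W \<subseteq> X closure_of U"
    using interior_of_subset closure_of_mono[OF \<open>N \<subseteq> U\<close>] by (rule order_trans)
  ultimately show ?thesis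
    using \<open>N \<subseteq> topspace X\<close> by (auto simp: nowhere_dense_in_def)
qed

locale nowhere_dense_exhaustion =
  fixes X :: "'a topology" and U :: "'a set" and K :: "nat \<Rightarrow> 'a set"
  assumes openin_U: "openin X U"
    and closedin_K: "closedin X (K n)"
    and interior_of_K: "X interior_of K n = {}"
    and mono_K: "mono K"
    and K_0: "K 0 = {}"
    and U_subset: "U \<subseteq> (\<Union>n. K n)"
begin

definition level :: "'a \<Rightarrow> nat" where
  "level x = (LEAST n. x \<in> K n)"

definition recip_level :: "'a \<Rightarrow> real" where
  "recip_level x = (if x \<in> U then 1 / real (level x) else 1)"

definition layer :: "nat \<Rightarrow> 'a set" where
  "layer m = U \<inter> K (Suc m) - K m"

lemma mem_K_iff_level_le:
  assumes "x \<in> U"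
  shows "x \<in> K n \<longleftrightarrow> level x \<le> n"
proof
  show "x \<in> K n \<Longrightarrow> level x \<le> n"
    unfolding level_def by (rule Least_le)
  obtain m where "x \<in> K m"
    using assms U_subset by blast
  then have "x \<in> K (level x)"
    unfolding level_def by (rule LeastI)
  then show "level x \<le> n \<Longrightarrow> x \<in> K n"
    using monoD[OF mono_K, of "level x" n] by blast
qed

lemma level_pos: "x \<in> U \<Longrightarrow> 0 < level x"
  using mem_K_iff_level_le[of x 0] K_0 by auto

lemma layer_eq: "layer m = {x \<in> U. level x = Suc m}"
  by (auto simp: layer_def mem_K_iff_level_le)

lemma recip_level_layer: "x \<in> layer m \<Longrightarrow> recip_level x = 1 / real (Suc m)"
  by (simp add: layer_eq recip_level_def)

lemma recip_level_outside_K: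
  assumes "x \<in> U" "x \<notin> K n"
  shows "recip_level x \<le> 1 / (real n + 1)"
proof -
  have "real n + 1 \<le> real (level x)"
    using assms by (simp add: mem_K_iff_level_le)
  then show ?thesis
    using assms(1) by (simp add: recip_level_def frac_le)
qed

lemma recip_level_nonneg: "0 \<le> recip_level x"
  by (simp add: recip_level_def)

lemma recip_level_range: "recip_level x \<in> {1 / real n | n. n \<ge> 1}"
proof (cases "x \<in> U")
  case True
  then show ?thesis
    using level_pos[of x] by (auto simp: recip_level_def Suc_le_eq)
next
  case False
  then have "recip_level x = 1 / real (1::nat)"
    by (simp add: recip_level_def)
  then show ?thesis by blast
qed

lemma recip_level_not_continuous_at:
  assumes "x \<in> U"
  shows "\<not> continuous_at_point X recip_level x"
proof
  assume cont: "continuous_at_point X recip_level x"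
  define n where "n = level x"
  have "1 / (real n + 1) < recip_level x"
    using assms level_pos[OF assms] by (simp add: n_def recip_level_def frac_less2)
  then obtain W where W: "openin X W" "x \<in> W" "recip_level ` W \<subseteq> {1 / (real n + 1)<..}"
    using cont unfolding continuous_at_point_def by (meson greaterThan_iff open_greaterThan)
  have "\<not> W \<inter> U \<subseteq> K n"
  proof
    assume "W \<inter> U \<subseteq> K n"
    then have "W \<inter> U \<subseteq> X interior_of K n"
      using W(1) openin_U by (meson interior_of_maximal openin_Int)
    then show False
      using interior_of_K W(2) assms by blast
  qed
  then obtain y where "y \<in> W" "y \<in> U" "y \<notin> K n" by blast
  then show False
    using W(3) recip_level_outside_K[of y n] by force
qed

lemma fragmentable_recip_level: "fragmentable X recip_level"
  unfolding fragmentable_def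
proof (intro allI impI, elim conjE)
  fix e :: real and C
  assume e: "e > 0" and C: "closedin X C" "C \<noteq> {}"
  show "\<exists>V. openin X V \<and> V \<inter> C \<noteq> {} \<and> diam_less (recip_level ` (V \<inter> C)) e"
  proof (cases "C \<inter> U = {}")
    case True
    then have "recip_level constant_on (topspace X \<inter> C)"
      by (auto simp: constant_on_def recip_level_def)
    then have "diam_less (recip_level ` (topspace X \<inter> C)) e"
      using e by (rule diam_less_image_constant_on)
    moreover have "topspace X \<inter> C \<noteq> {}"
      using C closedin_subset by blast
    ultimately show ?thesis
      by (intro exI[of _ "topspace X"]) simp
  next
    case False
    define meets where "meets n \<longleftrightarrow> (U - K n) \<inter> C \<noteq> {}" for n
    obtain N where N: "1 / (real N + 1) < e"
      using reals_Archimedean[OF e] by (auto simp: inverse_eq_divide add.commute)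
    show ?thesis
    proof (cases "meets N")
      case True
      have "recip_level ` ((U - K N) \<inter> C) \<subseteq> {0 .. 1 / (real N + 1)}"
        using recip_level_outside_K recip_level_nonneg by auto
      then have "diam_less (recip_level ` ((U - K N) \<inter> C)) e"
        using N diam_less_if_subset_atLeastAtMost by simp
      moreover have "openin X (U - K N)"
        using openin_U closedin_K by (rule openin_diff)
      ultimately show ?thesis
        using True unfolding meets_def by (intro exI[of _ "U - K N"]) blast
    next
      case False
      have "meets 0"
        using \<open>C \<inter> U \<noteq> {}\<close> K_0 unfolding meets_def by blast
      then obtain m where m: "meets m" "\<not> meets (Suc m)"
        using ex_least_nat_less[of "\<lambda>n. \<not> meets n" N] False by blast
      then have "(U - K m) \<inter> C \<subseteq> layer m"
        unfolding meets_def layer_def by blast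
      then have "\<forall>x\<in>(U - K m) \<inter> C. recip_level x = 1 / real (Suc m)"
        using recip_level_layer by blast
      then have "recip_level constant_on ((U - K m) \<inter> C)"
        unfolding constant_on_def by blast
      then have "diam_less (recip_level ` ((U - K m) \<inter> C)) e"
        using e by (rule diam_less_image_constant_on)
      moreover have "openin X (U - K m)"
        using openin_U closedin_K by (rule openin_diff)
      ultimately show ?thesis
        using m(1) unfolding meets_def by (intro exI[of _ "U - K m"]) blast
    qed
  qed
qed

lemma lebesgue_property_recip_level:
  assumes "perfectly_normal X"
  shows "lebesgue_property X recip_level"
proof (rule lebesgue_property_if_constant_on_fsigma_cover[of "insert (topspace X - U) (range layer)"])
  show "countable (insert (topspace X - U) (range layer))"
    by simp
  have "fsigma_in X (layer m)" for m
  proof -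
    have "fsigma_in X (U \<inter> K (Suc m))"
      using assms openin_U closedin_K
      by (blast intro: fsigma_in_Int perfectly_normal_openin_imp_fsigma_in closed_imp_fsigma_in)
    moreover have "gdelta_in X (K m)"
      using assms closedin_K unfolding perfectly_normal_def by blast
    ultimately show ?thesis
      unfolding layer_def by (rule fsigma_in_diff)
  qed
  moreover have "fsigma_in X (topspace X - U)"
    using openin_U by (simp add: closed_imp_fsigma_in closedin_diff)
  ultimately show "fsigma_in X P" if "P \<in> insert (topspace X - U) (range layer)" for P
    using that by blast
  have "\<Union>(range layer) = U"
  proof
    show "\<Union>(range layer) \<subseteq> U"
      by (auto simp: layer_def)
    show "U \<subseteq> \<Union>(range layer)"
    proof
      fix x assume "x \<in> U"
      then have "x \<in> layer (level x - 1)"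
        using level_pos by (simp add: layer_eq)
      then show "x \<in> \<Union>(range layer)"
        by (rule UN_I[OF UNIV_I])
    qed
  qed
  then show "\<Union>(insert (topspace X - U) (range layer)) = topspace X"
    using openin_subset[OF openin_U] by auto
  have "recip_level constant_on layer m" for m
    unfolding constant_on_def using recip_level_layer by blast
  moreover have "recip_level constant_on (topspace X - U)"
    by (simp add: constant_on_def recip_level_def)
  ultimately show "recip_level constant_on P" if "P \<in> insert (topspace X - U) (range layer)" for P
    using that by blast
qed

end

lemma not_baire_space_imp_nowhere_dense_exhaustion:
  assumes "\<not> baire_space X"
  obtains U K where "openin X U" "U \<noteq> {}" "nowhere_dense_exhaustion X U K"
proof -
  obtain U \<N> where U: "openin X U" "U \<noteq> {}" and \<N>: "countable \<N>" "U = \<Union>\<N>"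
    and nd: "\<And>N. N \<in> \<N> \<Longrightarrow> nowhere_dense_in (subtopology X U) N"
    using assms unfolding baire_space_def meager_in_def by blast
  have "\<N> \<noteq> {}"
    using U \<N> by auto
  define N where "N k = from_nat_into \<N> k" for k
  have N_nd: "nowhere_dense_in X (N k)" for k
    unfolding N_def by (meson U(1) \<open>\<N> \<noteq> {}\<close> from_nat_into nd nowhere_dense_in_open_subtopology)
  define K where "K n = (\<Union>k<n. X closure_of N k)" for n
  have "X interior_of K n = {}" for n
  proof (induction n)
    case (Suc n)
    have "K (Suc n) = X closure_of N n \<union> K n"
      by (simp add: K_def lessThan_Suc)
    then show ?case
      using Suc N_nd by (simp add: interior_of_union_eq_empty nowhere_dense_in_def)
  qed (simp add: K_def)
  moreover have "U \<subseteq> (\<Union>n. K n)"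
  proof
    fix x assume "x \<in> U"
    then obtain k where "x \<in> N k"
      using \<N> \<open>\<N> \<noteq> {}\<close> by (metis UnionE N_def from_nat_into_surj)
    then have "x \<in> X closure_of N k"
      using N_nd closure_of_subset by (fastforce simp: nowhere_dense_in_def)
    then show "x \<in> (\<Union>n. K n)"
      unfolding K_def by blast
  qed
  moreover have "closedin X (K n)" for n
    unfolding K_def by (intro closedin_Union) auto
  moreover have "mono K"
    unfolding K_def by (intro monoI UN_mono) auto
  ultimately have "nowhere_dense_exhaustion X U K"
    using U(1) by unfold_locales (auto simp: K_def)
  with U that show ?thesis by blast
qed

theorem lemma2p7:
  fixes X :: "'a topology"
  assumes "\<not> baire_space X"
  shows "\<exists>U (f :: 'a \<Rightarrow> real).
           openin X U \<and> U \<noteq> {} \<and> fragmentable X f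
           \<and> (\<forall>x\<in>U. \<not> continuous_at_point X f x)
           \<and> f ` topspace X \<subseteq> {1 / real n | n. n \<ge> 1}
           \<and> (perfectly_normal X \<longrightarrow> lebesgue_property X f)"
proof -
  obtain U K where U: "openin X U" "U \<noteq> {}" and K: "nowhere_dense_exhaustion X U K"
    using not_baire_space_imp_nowhere_dense_exhaustion[OF assms] .
  interpret nowhere_dense_exhaustion X U K by (rule K)
  show ?thesis
  proof (intro exI[of _ U] exI[of _ recip_level] conjI ballI impI)
    show "recip_level ` topspace X \<subseteq> {1 / real n | n. n \<ge> 1}"
      using recip_level_range by blast
  qed (simp_all add: U fragmentable_recip_level recip_level_not_continuous_at
      lebesgue_property_recip_level)
qed

end
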